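(* Let $n\ge 3$ and let $V$ be an optimal acyclic matching on $\Delta^n$. Let $\rho(V)$ be the set of pairs $(\sigma,\tau)\in V$ with $\dim\tau\le n-2$ (i.e. the pairs of $V$ lying in the $(n-2)$-skeleton $\Delta^n_{(n-2)}$). Then $\rho(V)$ is an optimal acyclic matching on $\Delta^n_{(n-2)}$ with exactly one critical vertex and exactly $n$ critical $(n-2)$-dimensional simplices (and no other critical simplices).
   Context: All simplicial complexes are finite abstract simplicial complexes; simplices are nonempty. $\Delta^n$ is the simplicial complex of all nonempty subsets of an $(n+1)$-element vertex set; $\Delta^n_{(k)}$ denotes its $k$-skeleton. The Hasse diagram $\mathcal{H}(K)$ of $K$ is the directed graph whose vertices are the simplices of $K$, with an edge $\sigma\to\tau$ whenever $\sigma\subsetneq\tau$ and $\dim\tau=\dim\sigma+1$. A matching on $\mathcal{H}(K)$ is a set $W$ of edges of $\mathcal{H}(K)$, no two sharing a vertex; an edge $\sigma\to\tau$ in $W$ is called a pair $(\sigma,\tau)$, and a simplex lying in no pair is called critical. $W$ is acyclic if the directed graph obtained from $\mathcal{H}(K)$ by reversing every edge in $W$ has no directed cycle. An acyclic matching is optimal if it minimizes the total number of critical simplices among all acyclic matchings on $K$. *)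

theory Defs
  imports Main
begin

text \<open>Finite abstract simplicial complexes: a complex is a set of simplices,
each simplex a finite nonempty set of vertices.\<close>

definition simplex_dim :: "'a set \<Rightarrow> nat" where
  "simplex_dim s = card s - 1"

definition Delta :: "nat \<Rightarrow> nat set set" where
  "Delta n = {s. s \<subseteq> {0..n} \<and> s \<noteq> {}}"

definition skeleton :: "'a set set \<Rightarrow> nat \<Rightarrow> 'a set set" where
  "skeleton K k = {s \<in> K. simplex_dim s \<le> k}"

definition hasse_edges :: "'a set set \<Rightarrow> ('a set \<times> 'a set) set" where
  "hasse_edges K = {(s, t). s \<in> K \<and> t \<in> K \<and> s \<subset> t \<and> simplex_dim t = simplex_dim s + 1}"

definition is_matching :: "'a set set \<Rightarrow> ('a set \<times> 'a set) set \<Rightarrow> bool" where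
  "is_matching K W \<longleftrightarrow> W \<subseteq> hasse_edges K \<and>
     (\<forall>e\<in>W. \<forall>f\<in>W. e \<noteq> f \<longrightarrow> {fst e, snd e} \<inter> {fst f, snd f} = {})"

definition modified_hasse :: "'a set set \<Rightarrow> ('a set \<times> 'a set) set \<Rightarrow> ('a set \<times> 'a set) set" where
  "modified_hasse K W = (hasse_edges K - W) \<union> W\<inverse>"

definition acyclic_matching :: "'a set set \<Rightarrow> ('a set \<times> 'a set) set \<Rightarrow> bool" where
  "acyclic_matching K W \<longleftrightarrow> is_matching K W \<and> acyclic (modified_hasse K W)"

definition critical :: "'a set set \<Rightarrow> ('a set \<times> 'a set) set \<Rightarrow> 'a set set" where
  "critical K W = {s \<in> K. \<forall>e\<in>W. s \<noteq> fst e \<and> s \<noteq> snd e}"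

definition optimal_acyclic_matching :: "'a set set \<Rightarrow> ('a set \<times> 'a set) set \<Rightarrow> bool" where
  "optimal_acyclic_matching K W \<longleftrightarrow> acyclic_matching K W \<and>
     (\<forall>W'. acyclic_matching K W' \<longrightarrow> card (critical K W) \<le> card (critical K W'))"

end

theory Submission
  imports Defs
begin

(* The cone matching, which pairs every face s of Delta n avoiding the vertex 0 with
   insert 0 s, is acyclic and leaves only the vertex {0} critical. As every acyclic matching
   has a critical vertex, an optimal matching V on Delta n has exactly one critical simplex,
   a vertex. The top simplex is then matched with one facet and the other n facets with
   ridges, and these n ridges are exactly the simplices that become critical when the pairs
   leaving the (n-2)-skeleton are dropped. The restriction is optimal because for every
   acyclic matching on the skeleton the alternating count of critical simplices equals the
   Euler characteristic 1 + (-1)^n * n, and some critical simplex is a vertex. *)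

definition simplicial_complex :: "'a set set \<Rightarrow> bool" where
  "simplicial_complex K \<longleftrightarrow> finite K \<and> (\<forall>s\<in>K. finite s \<and> s \<noteq> {})
     \<and> (\<forall>s\<in>K. \<forall>t. t \<subseteq> s \<longrightarrow> t \<noteq> {} \<longrightarrow> t \<in> K)"

lemma simplicial_complexI:
  assumes "finite K" "\<And>s. s \<in> K \<Longrightarrow> finite s" "\<And>s. s \<in> K \<Longrightarrow> s \<noteq> {}"
    and "\<And>s t. s \<in> K \<Longrightarrow> t \<subseteq> s \<Longrightarrow> t \<noteq> {} \<Longrightarrow> t \<in> K"
  shows "simplicial_complex K"
  using assms unfolding simplicial_complex_def by blast

lemma simplicial_complexD:
  assumes "simplicial_complex K"
  shows "finite K" and "s \<in> K \<Longrightarrow> finite s" and "s \<in> K \<Longrightarrow> s \<noteq> {}"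
    and "s \<in> K \<Longrightarrow> t \<subseteq> s \<Longrightarrow> t \<noteq> {} \<Longrightarrow> t \<in> K"
  using assms unfolding simplicial_complex_def by blast+

lemma is_matching_pair_eq:
  assumes "is_matching K W" "e \<in> W" "f \<in> W" "x \<in> {fst e, snd e}" "x \<in> {fst f, snd f}"
  shows "e = f"
  using assms unfolding is_matching_def by blast

lemma is_matching_hasse_edge:
  assumes "is_matching K W" "(s, t) \<in> W"
  shows "s \<in> K" "t \<in> K" "s \<subset> t" "simplex_dim t = simplex_dim s + 1"
  using assms unfolding is_matching_def hasse_edges_def by auto

lemma is_matching_inj_on_fst:
  assumes "is_matching K W"
  shows "inj_on fst W"
proof (rule inj_onI)
  fix e f assume "e \<in> W" "f \<in> W" "fst e = fst f"
  then show "e = f" using is_matching_pair_eq[OF assms, of e f "fst e"] by simp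
qed

lemma is_matching_inj_on_snd:
  assumes "is_matching K W"
  shows "inj_on snd W"
proof (rule inj_onI)
  fix e f assume "e \<in> W" "f \<in> W" "snd e = snd f"
  then show "e = f" using is_matching_pair_eq[OF assms, of e f "snd e"] by simp
qed

lemma is_matching_subset:
  assumes "is_matching K W" "W' \<subseteq> W" "W' \<subseteq> hasse_edges L"
  shows "is_matching L W'"
  using assms unfolding is_matching_def by (meson subsetD)

lemma critical_iff:
  "s \<in> critical K W \<longleftrightarrow> s \<in> K \<and> (\<forall>(a, b)\<in>W. s \<noteq> a \<and> s \<noteq> b)"
  unfolding critical_def by auto

text \<open>Matched simplices cancel in pairs of opposite sign.\<close>
lemma alternating_sum_critical:
  assumes "finite K" and m: "is_matching K W"
  shows "(\<Sum>s\<in>critical K W. (-1::int) ^ simplex_dim s) = (\<Sum>s\<in>K. (-1) ^ simplex_dim s)"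
proof -
  let ?f = "\<lambda>s. (-1::int) ^ simplex_dim s"
  have WK: "W \<subseteq> K \<times> K" using is_matching_hasse_edge[OF m] by auto
  then have "finite W" using assms(1) finite_subset by blast
  have disj: "fst ` W \<inter> snd ` W = {}"
  proof (rule ccontr)
    assume "fst ` W \<inter> snd ` W \<noteq> {}"
    then obtain s t u where st: "(s, t) \<in> W" and us: "(u, s) \<in> W" by force
    then have "(s, t) = (u, s)" using is_matching_pair_eq[OF m st us, of s] by simp
    then show False using is_matching_hasse_edge(3)[OF m st] by simp
  qed
  have K_split: "K = critical K W \<union> (fst ` W \<union> snd ` W)"
    and crit_disj: "critical K W \<inter> (fst ` W \<union> snd ` W) = {}"
    unfolding critical_def using WK by force+
  have "(\<Sum>s\<in>fst ` W \<union> snd ` W. ?f s) = (\<Sum>e\<in>W. ?f (fst e) + ?f (snd e))"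
    using \<open>finite W\<close> disj is_matching_inj_on_fst[OF m] is_matching_inj_on_snd[OF m]
    by (simp add: sum.union_disjoint sum.reindex sum.distrib)
  also have "\<dots> = 0"
    by (rule sum.neutral) (auto simp: is_matching_hasse_edge(4)[OF m])
  finally show ?thesis
    using assms(1) K_split crit_disj by (metis add.right_neutral finite_Un sum.union_disjoint)
qed

lemma hasse_edge_card:
  assumes K: "simplicial_complex K" and "(s, t) \<in> hasse_edges K"
  shows "s \<subset> t" "finite t" "card t = Suc (card s)"
proof -
  have "s \<subset> t" "simplex_dim t = simplex_dim s + 1" "s \<in> K" "t \<in> K"
    using assms(2) unfolding hasse_edges_def by auto
  moreover from this have "card s > 0" "finite t"
    using simplicial_complexD(2,3)[OF K] card_gt_0_iff by blast+
  ultimately show "s \<subset> t" "finite t" "card t = Suc (card s)" by (auto simp: simplex_dim_def)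
qed

lemma matched_vertex_reachable_from_vertex:
  assumes K: "simplicial_complex K" and m: "is_matching K W" and vb: "({v}, b) \<in> W"
  obtains w where "{w} \<in> K" "({w}, {v}) \<in> (modified_hasse K W)\<^sup>+"
proof -
  have "({v}, b) \<in> hasse_edges K" using m vb unfolding is_matching_def by blast
  then have "{v} \<subset> b" "finite b" "card b = 2" using hasse_edge_card[OF K] by auto
  moreover have "v \<in> b" using \<open>{v} \<subset> b\<close> by blast
  ultimately have "card (b - {v}) = 1" by simp
  then obtain w where "b - {v} = {w}" by (rule card_1_singletonE)
  then have b: "b = {v, w}" "w \<noteq> v" using \<open>v \<in> b\<close> by auto
  have "b \<in> K" using is_matching_hasse_edge(2)[OF m vb] .
  then have "{w} \<in> K" using b simplicial_complexD(4)[OF K] by blast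
  then have "({w}, b) \<in> hasse_edges K"
    using \<open>b \<in> K\<close> b \<open>({v}, b) \<in> hasse_edges K\<close> unfolding hasse_edges_def
    by (auto simp: simplex_dim_def)
  moreover have "({w}, b) \<notin> W" using is_matching_pair_eq[OF m _ vb, of "({w}, b)" b] b by auto
  ultimately have "({w}, b) \<in> modified_hasse K W" and "(b, {v}) \<in> modified_hasse K W"
    using vb unfolding modified_hasse_def by auto
  then have "({w}, {v}) \<in> (modified_hasse K W)\<^sup>+" by (meson trancl.simps)
  with \<open>{w} \<in> K\<close> show thesis by (rule that)
qed

text \<open>A vertex that is minimal for the modified Hasse diagram cannot be matched upwards, by
  the previous lemma, nor downwards, as simplices are nonempty.\<close>
lemma acyclic_matching_critical_vertex:
  assumes K: "simplicial_complex K" "K \<noteq> {}" and am: "acyclic_matching K W"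
  shows "\<exists>v. {v} \<in> critical K W"
proof -
  let ?r = "modified_hasse K W" and ?Q = "{{v} | v. {v} \<in> K}"
  have m: "is_matching K W" and "acyclic ?r" using am unfolding acyclic_matching_def by auto
  have "W \<subseteq> K \<times> K" using is_matching_hasse_edge[OF m] by auto
  then have "?r \<subseteq> K \<times> K" unfolding modified_hasse_def hasse_edges_def by blast
  then have "finite ?r" using simplicial_complexD(1)[OF K(1)] finite_subset by blast
  then have wf: "wf (?r\<^sup>+)" using \<open>acyclic ?r\<close> finite_acyclic_wf wf_trancl by blast
  obtain s x where "s \<in> K" "x \<in> s" using K simplicial_complexD(3)[OF K(1)] by blast
  then have "{x} \<in> ?Q" using simplicial_complexD(4)[OF K(1)] by blast
  then obtain v where vK: "{v} \<in> K" and v_min: "\<And>y. (y, {v}) \<in> ?r\<^sup>+ \<Longrightarrow> y \<notin> ?Q"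
    using wf_eq_minimal[THEN iffD1, OF wf, rule_format, of "{x}" ?Q] by blast
  have "a \<noteq> {v}" if "(a, b) \<in> W" for a b
    using matched_vertex_reachable_from_vertex[OF K(1) m] v_min that by blast
  moreover have "b \<noteq> {v}" if "(a, b) \<in> W" for a b
    using is_matching_hasse_edge(1,3)[OF m that] simplicial_complexD(3)[OF K(1)] by blast
  ultimately show ?thesis using vK unfolding critical_iff by blast
qed

lemma hasse_edges_subcomplex: "L \<subseteq> K \<Longrightarrow> hasse_edges L = hasse_edges K \<inter> L \<times> L"
  unfolding hasse_edges_def by blast

lemma acyclic_matching_restrict:
  assumes "acyclic_matching K W" "L \<subseteq> K"
  shows "acyclic_matching L (W \<inter> L \<times> L)"
proof -
  have m: "is_matching K W" and ac: "acyclic (modified_hasse K W)"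
    using assms(1) unfolding acyclic_matching_def by auto
  have "W \<subseteq> hasse_edges K" using m unfolding is_matching_def by (rule conjunct1)
  then have "is_matching L (W \<inter> L \<times> L)"
    using is_matching_subset[OF m] hasse_edges_subcomplex[OF assms(2)] by blast
  moreover have "modified_hasse L (W \<inter> L \<times> L) \<subseteq> modified_hasse K W"
    unfolding modified_hasse_def hasse_edges_subcomplex[OF assms(2)] by blast
  ultimately show ?thesis using ac acyclic_subset unfolding acyclic_matching_def by blast
qed

lemma skeleton_subset: "skeleton K k \<subseteq> K"
  unfolding skeleton_def by blast

lemma matching_pairs_in_skeleton:
  assumes "is_matching K W"
  shows "{(s, t) \<in> W. simplex_dim t \<le> k} = W \<inter> skeleton K k \<times> skeleton K k"
proof -
  have "(s, t) \<in> skeleton K k \<times> skeleton K k \<longleftrightarrow> simplex_dim t \<le> k" if "(s, t) \<in> W" for s t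
    using is_matching_hasse_edge[OF assms that] unfolding skeleton_def by auto
  then show ?thesis by blast
qed

lemma acyclic_matching_skeleton:
  assumes "acyclic_matching K W"
  shows "acyclic_matching (skeleton K k) {(s, t) \<in> W. simplex_dim t \<le> k}"
proof -
  have "is_matching K W" using assms unfolding acyclic_matching_def by (rule conjunct1)
  then have "{(s, t) \<in> W. simplex_dim t \<le> k} = W \<inter> skeleton K k \<times> skeleton K k"
    by (rule matching_pairs_in_skeleton)
  then show ?thesis using acyclic_matching_restrict[OF assms skeleton_subset] by simp
qed

lemma critical_skeleton:
  assumes m: "is_matching K W"
  shows "critical (skeleton K k) {(s, t) \<in> W. simplex_dim t \<le> k}
       = (critical K W \<inter> skeleton K k) \<union> {s. \<exists>t. (s, t) \<in> W \<and> simplex_dim t = k + 1}"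
    (is "?C = ?A \<union> ?B")
proof (intro equalityI subsetI)
  fix s assume s: "s \<in> ?C"
  then have s_skel: "s \<in> skeleton K k" unfolding critical_def by blast
  show "s \<in> ?A \<union> ?B"
  proof (cases "s \<in> critical K W")
    case False
    then obtain a b where ab: "(a, b) \<in> W" "s = a \<or> s = b"
      using s_skel skeleton_subset unfolding critical_iff by blast
    have "(a, b) \<notin> {(s, t) \<in> W. simplex_dim t \<le> k}" using s ab(2) unfolding critical_def by auto
    then have "simplex_dim b > k" using ab(1) by simp
    moreover have "simplex_dim s \<le> k" using s_skel unfolding skeleton_def by simp
    ultimately have "s = a" "simplex_dim b = k + 1"
      using ab(2) is_matching_hasse_edge(4)[OF m ab(1)] by auto
    then show ?thesis using ab(1) by blast
  qed (use s_skel in blast)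
next
  fix s assume "s \<in> ?A \<union> ?B"
  then show "s \<in> ?C"
  proof
    assume "s \<in> ?A"
    then show ?thesis unfolding critical_def by blast
  next
    assume "s \<in> ?B"
    then obtain t where st: "(s, t) \<in> W" "simplex_dim t = k + 1" by blast
    have "s \<in> skeleton K k"
      using is_matching_hasse_edge[OF m st(1)] st(2) unfolding skeleton_def by simp
    moreover have "e = (s, t)" if "e \<in> W" "s \<in> {fst e, snd e}" for e
      using is_matching_pair_eq[OF m that(1) st(1)] that(2) by simp
    ultimately show ?thesis using st(2) unfolding critical_def by fastforce
  qed
qed

lemma card_ge_of_alternating_sum:
  fixes d :: "'a \<Rightarrow> nat"
  assumes "finite C" "x \<in> C" "d x = 0"
    and sum_eq: "(\<Sum>s\<in>C. (-1::int) ^ d s) = 1 + (-1) ^ k * int m"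
  shows "m + 1 \<le> card C"
proof -
  have "(\<Sum>s\<in>C. (-1::int) ^ d s) = 1 + (\<Sum>s\<in>C - {x}. (-1) ^ d s)"
    using sum.remove[OF assms(1,2), of "\<lambda>s. (-1) ^ d s"] assms(3) by simp
  then have "(\<Sum>s\<in>C - {x}. (-1::int) ^ d s) = (-1) ^ k * int m" using sum_eq by linarith
  then have "int m = \<bar>\<Sum>s\<in>C - {x}. (-1::int) ^ d s\<bar>" by (simp add: abs_mult power_abs)
  also have "\<dots> \<le> (\<Sum>s\<in>C - {x}. \<bar>(-1::int) ^ d s\<bar>)" by (rule sum_abs)
  also have "\<dots> = int (card (C - {x}))" by (simp add: power_abs)
  finally have "m \<le> card C - 1" using assms(1,2) by simp
  moreover have "card C > 0" using assms(1,2) card_gt_0_iff by blast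
  ultimately show ?thesis by linarith
qed

text \<open>Every acyclic matching has a critical vertex and the same alternating count of
  critical simplices.\<close>
lemma optimal_acyclic_matchingI:
  assumes K: "simplicial_complex K" and am: "acyclic_matching K W"
    and crit: "critical K W = insert {v} S" "{v} \<notin> S" "\<And>s. s \<in> S \<Longrightarrow> simplex_dim s = k"
  shows "optimal_acyclic_matching K W"
  unfolding optimal_acyclic_matching_def
proof (intro conjI allI impI am)
  fix W' assume am': "acyclic_matching K W'"
  have "finite K" using simplicial_complexD(1)[OF K] .
  then have "finite (critical K W)" "finite (critical K W')" unfolding critical_def by auto
  then have "finite S" using crit(1) by simp
  have "K \<noteq> {}" using crit(1) unfolding critical_def by blast
  then obtain u where u: "{u} \<in> critical K W'"
    using acyclic_matching_critical_vertex[OF K _ am'] by blast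
  have "(\<Sum>s\<in>critical K W'. (-1::int) ^ simplex_dim s) = (\<Sum>s\<in>critical K W. (-1) ^ simplex_dim s)"
    using am am' \<open>finite K\<close> alternating_sum_critical unfolding acyclic_matching_def by metis
  also have "\<dots> = 1 + (-1) ^ k * int (card S)"
    using crit \<open>finite S\<close> by (simp add: simplex_dim_def)
  finally have "card S + 1 \<le> card (critical K W')"
    using card_ge_of_alternating_sum[OF \<open>finite (critical K W')\<close> u, of simplex_dim k]
    by (simp add: simplex_dim_def)
  then show "card (critical K W) \<le> card (critical K W')"
    using crit \<open>finite S\<close> by simp
qed

lemma mem_Delta_iff: "s \<in> Delta n \<longleftrightarrow> s \<subseteq> {0..n} \<and> s \<noteq> {}"
  unfolding Delta_def by simp

lemma finite_Delta: "finite (Delta n)"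
  by (rule finite_subset[of _ "Pow {0..n}"]) (auto simp: Delta_def)

lemma simplicial_complex_Delta: "simplicial_complex (Delta n)"
  by (rule simplicial_complexI) (auto simp: finite_Delta mem_Delta_iff intro: finite_subset)

lemma simplicial_complex_skeleton:
  assumes K: "simplicial_complex K"
  shows "simplicial_complex (skeleton K k)"
proof (rule simplicial_complexI)
  show "finite (skeleton K k)"
    using simplicial_complexD(1)[OF K] skeleton_subset by (rule finite_subset[rotated])
  fix s assume s: "s \<in> skeleton K k"
  then have "s \<in> K" "simplex_dim s \<le> k" unfolding skeleton_def by auto
  then show "finite s" "s \<noteq> {}" using simplicial_complexD(2,3)[OF K] by auto
  fix t assume "t \<subseteq> s" "t \<noteq> {}"
  then have "t \<in> K" using simplicial_complexD(4)[OF K \<open>s \<in> K\<close>] by blast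
  moreover have "card t \<le> card s"
    using card_mono[OF simplicial_complexD(2)[OF K \<open>s \<in> K\<close>] \<open>t \<subseteq> s\<close>] .
  ultimately show "t \<in> skeleton K k"
    using \<open>simplex_dim s \<le> k\<close> unfolding skeleton_def simplex_dim_def by simp
qed

lemma card_Delta_dim: "card {s \<in> Delta n. simplex_dim s = k} = Suc n choose Suc k"
proof -
  have "s \<in> Delta n \<and> simplex_dim s = k \<longleftrightarrow> s \<subseteq> {0..n} \<and> card s = Suc k" for s
  proof (cases "s \<subseteq> {0..n} \<and> s \<noteq> {}")
    case True
    then have "card s > 0" using finite_subset[of s "{0..n}"] card_gt_0_iff by blast
    then show ?thesis using True unfolding mem_Delta_iff simplex_dim_def by auto
  qed (auto simp: mem_Delta_iff)
  then have "{s \<in> Delta n. simplex_dim s = k} = {s. s \<subseteq> {0..n} \<and> card s = Suc k}" by blast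
  then show ?thesis using n_subsets[of "{0..n}" "Suc k"] by simp
qed

lemma Delta_dim_eq_top:
  assumes "s \<in> Delta n"
  shows "simplex_dim s = n \<longleftrightarrow> s = {0..n}"
proof -
  have s: "s \<subseteq> {0..n}" "s \<noteq> {}" using assms unfolding mem_Delta_iff by auto
  then have "card s > 0" using finite_subset[of s "{0..n}"] card_gt_0_iff by blast
  then have "simplex_dim s = n \<longleftrightarrow> card s = card {0..n}" by (auto simp: simplex_dim_def)
  also have "\<dots> \<longleftrightarrow> s = {0..n}" using card_subset_eq[OF finite_atLeastAtMost s(1)] by auto
  finally show ?thesis .
qed

definition cone_matching :: "nat \<Rightarrow> (nat set \<times> nat set) set" where
  "cone_matching n = {(s, insert 0 s) | s. s \<subseteq> {1..n} \<and> s \<noteq> {}}"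

lemma cone_matching_iff:
  "(s, t) \<in> cone_matching n \<longleftrightarrow> s \<subseteq> {1..n} \<and> s \<noteq> {} \<and> t = insert 0 s"
  unfolding cone_matching_def by blast

lemma hasse_edge_to_apex_in_cone_matching:
  assumes "(s, t) \<in> hasse_edges (Delta n)" "0 \<notin> s" "0 \<in> t"
  shows "(s, t) \<in> cone_matching n"
proof -
  have "s \<subseteq> {0..n}" "s \<noteq> {}" using assms(1) unfolding hasse_edges_def mem_Delta_iff by auto
  then have "s \<subseteq> {1..n}" using assms(2) by (auto simp: subset_eq Suc_le_eq)
  have "s \<subset> t" "card t = Suc (card s)" "finite t"
    using hasse_edge_card[OF simplicial_complex_Delta assms(1)] by auto
  then have "finite s" using finite_subset by blast
  have "insert 0 s \<subseteq> t" using \<open>s \<subset> t\<close> assms(3) by blast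
  moreover have "card (insert 0 s) = card t" using \<open>finite s\<close> \<open>card t = _\<close> assms(2) by simp
  ultimately have "t = insert 0 s" using card_subset_eq[OF \<open>finite t\<close>] by blast
  then show ?thesis using \<open>s \<subseteq> {1..n}\<close> \<open>s \<noteq> {}\<close> unfolding cone_matching_iff by blast
qed

lemma is_matching_cone_matching: "is_matching (Delta n) (cone_matching n)"
  unfolding is_matching_def
proof (intro conjI ballI impI subsetI)
  fix e assume "e \<in> cone_matching n"
  then obtain s where e: "e = (s, insert 0 s)" "s \<subseteq> {1..n}" "s \<noteq> {}"
    unfolding cone_matching_def by blast
  then have "0 \<notin> s" "finite s" using finite_subset by auto
  then show "e \<in> hasse_edges (Delta n)"
    using e unfolding hasse_edges_def mem_Delta_iff simplex_dim_def by (auto simp: card_gt_0_iff)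
next
  fix e f assume "e \<in> cone_matching n" "f \<in> cone_matching n" "e \<noteq> f"
  then obtain s s' where ef: "e = (s, insert 0 s)" "f = (s', insert 0 s')"
    and "s \<subseteq> {1..n}" "s' \<subseteq> {1..n}"
    unfolding cone_matching_def by blast
  then have "0 \<notin> s" "0 \<notin> s'" "s \<noteq> s'" using \<open>e \<noteq> f\<close> by auto
  then have "s \<noteq> insert 0 s'" "insert 0 s \<noteq> s'" "insert 0 s \<noteq> insert 0 s'"
    using insert_ident[of 0 s s'] by blast+
  then show "{fst e, snd e} \<inter> {fst f, snd f} = {}" using ef \<open>s \<noteq> s'\<close> by auto
qed

text \<open>The potential card s + (if 0 \<in> s then 0 else 2) strictly increases along every
  edge of the modified Hasse diagram.\<close>
lemma acyclic_matching_cone_matching: "acyclic_matching (Delta n) (cone_matching n)"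
proof -
  define \<phi> where "\<phi> s = card s + (if 0 \<in> s then 0 else 2)" for s :: "nat set"
  have "(s, t) \<in> inv_image less_than \<phi>"
    if "(s, t) \<in> modified_hasse (Delta n) (cone_matching n)" for s t
    using that unfolding modified_hasse_def
  proof (elim UnE)
    assume st: "(s, t) \<in> hasse_edges (Delta n) - cone_matching n"
    then have "0 \<in> s \<or> 0 \<notin> t" using hasse_edge_to_apex_in_cone_matching by blast
    moreover have "s \<subset> t" "card t = Suc (card s)"
      using hasse_edge_card[OF simplicial_complex_Delta] st by auto
    ultimately show ?thesis unfolding \<phi>_def by auto
  next
    assume "(s, t) \<in> (cone_matching n)\<inverse>"
    then have "t \<subseteq> {1..n}" "s = insert 0 t" using cone_matching_iff[of t s n] by auto
    moreover from this have "0 \<notin> t" "finite t" using finite_subset by auto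
    ultimately show ?thesis unfolding \<phi>_def by simp
  qed
  then have "modified_hasse (Delta n) (cone_matching n) \<subseteq> inv_image less_than \<phi>" by auto
  then show ?thesis
    using is_matching_cone_matching acyclic_subset wf_acyclic[OF wf_inv_image[OF wf_less_than]]
    unfolding acyclic_matching_def by blast
qed

lemma critical_cone_matching: "critical (Delta n) (cone_matching n) = {{0}}"
proof -
  have "s \<notin> critical (Delta n) (cone_matching n)" if "s \<in> Delta n" "s \<noteq> {0}" for s
  proof (cases "0 \<in> s")
    case True
    then have "(s - {0}, s) \<in> cone_matching n"
      using that unfolding cone_matching_iff mem_Delta_iff by (auto simp: subset_eq Suc_le_eq)
    then show ?thesis unfolding critical_iff by blast
  next
    case False
    then have "(s, insert 0 s) \<in> cone_matching n"
      using that unfolding cone_matching_iff mem_Delta_iff by (auto simp: subset_eq Suc_le_eq)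
    then show ?thesis unfolding critical_iff by blast
  qed
  moreover have "{0} \<in> critical (Delta n) (cone_matching n)"
  proof -
    have "{0} \<noteq> a \<and> {0} \<noteq> b" if "(a, b) \<in> cone_matching n" for a b
      using that unfolding cone_matching_iff by auto
    then show ?thesis unfolding critical_iff by (auto simp: mem_Delta_iff)
  qed
  ultimately show ?thesis unfolding critical_def by blast
qed

lemma optimal_acyclic_matching_Delta_critical:
  assumes "optimal_acyclic_matching (Delta n) V"
  obtains v where "critical (Delta n) V = {{v}}"
proof -
  have am: "acyclic_matching (Delta n) V"
    using assms unfolding optimal_acyclic_matching_def by blast
  have "{0} \<in> Delta n" unfolding mem_Delta_iff by simp
  then obtain v where v: "{v} \<in> critical (Delta n) V"
    using acyclic_matching_critical_vertex[OF simplicial_complex_Delta _ am] by blast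
  have "card (critical (Delta n) V) \<le> card (critical (Delta n) (cone_matching n))"
    using assms acyclic_matching_cone_matching unfolding optimal_acyclic_matching_def by blast
  then have card_le: "card (critical (Delta n) V) \<le> Suc 0" by (simp add: critical_cone_matching)
  have "critical (Delta n) V \<subseteq> Delta n" unfolding critical_def by blast
  then have "finite (critical (Delta n) V)" using finite_Delta finite_subset by blast
  then have "card (critical (Delta n) V) \<noteq> 0" using v by auto
  then have "card (critical (Delta n) V) = 1" using card_le by linarith
  then obtain x where "critical (Delta n) V = {x}" by (rule card_1_singletonE)
  then have "critical (Delta n) V = {{v}}" using v by simp
  then show thesis by (rule that)
qed

text \<open>The top simplex is matched with one facet, so each of the other n facets is matched
  with a ridge below it.\<close>
lemma card_ridges_matched_with_facets:
  assumes m: "is_matching (Delta n) V" and "n \<ge> 2"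
    and crit: "\<And>s. s \<in> critical (Delta n) V \<Longrightarrow> simplex_dim s = 0"
  shows "card {s. \<exists>t. (s, t) \<in> V \<and> simplex_dim t = n - 1} = n"
proof -
  let ?T = "{0..n}" and ?F = "{g \<in> Delta n. simplex_dim g = n - 1}"
  let ?P = "{(s, t) \<in> V. simplex_dim t = n - 1}"
  have matched: "\<exists>a b. (a, b) \<in> V \<and> (s = a \<or> s = b)" if "s \<in> Delta n" "simplex_dim s \<noteq> 0" for s
  proof -
    have "s \<notin> critical (Delta n) V" using crit[of s] that(2) by auto
    then show ?thesis using that(1) unfolding critical_def by fastforce
  qed
  have T: "?T \<in> Delta n" "simplex_dim ?T = n" using Delta_dim_eq_top by (auto simp: mem_Delta_iff)
  obtain f where fT: "(f, ?T) \<in> V"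
  proof -
    obtain a b where ab: "(a, b) \<in> V" "?T = a \<or> ?T = b" using matched T \<open>n \<ge> 2\<close> by force
    have "b \<subseteq> ?T" using is_matching_hasse_edge(2)[OF m ab(1)] by (simp add: mem_Delta_iff)
    then have "?T \<noteq> a" using is_matching_hasse_edge(3)[OF m ab(1)] by blast
    then show thesis using that ab by blast
  qed
  have "f \<in> ?F" using is_matching_hasse_edge[OF m fT] T(2) by simp
  have snd_P: "snd ` ?P = ?F - {f}"
  proof (intro equalityI subsetI)
    fix g assume "g \<in> snd ` ?P"
    then obtain s where sg: "(s, g) \<in> V" "simplex_dim g = n - 1" by auto
    have "(s, g) \<noteq> (f, ?T)" using sg(2) T(2) \<open>n \<ge> 2\<close> by auto
    then have "g \<noteq> f" using is_matching_pair_eq[OF m sg(1) fT, of g] by auto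
    then show "g \<in> ?F - {f}" using sg is_matching_hasse_edge(2)[OF m sg(1)] by simp
  next
    fix g assume g: "g \<in> ?F - {f}"
    then obtain a b where ab: "(a, b) \<in> V" "g = a \<or> g = b" using matched[of g] \<open>n \<ge> 2\<close> by auto
    have "g \<noteq> a"
    proof
      assume "g = a"
      then have "b = ?T"
        using g is_matching_hasse_edge[OF m ab(1)] Delta_dim_eq_top \<open>n \<ge> 2\<close> by auto
      then show False using is_matching_pair_eq[OF m ab(1) fT, of b] g \<open>g = a\<close> by simp
    qed
    then show "g \<in> snd ` ?P" using ab g by force
  qed
  have "?P \<subseteq> V" by blast
  then have "inj_on fst ?P" "inj_on snd ?P"
    using inj_on_subset is_matching_inj_on_fst[OF m] is_matching_inj_on_snd[OF m] by blast+
  then have "card (fst ` ?P) = card (snd ` ?P)" by (simp add: card_image)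
  moreover have "card ?F = Suc n" using card_Delta_dim[of n "n - 1"] \<open>n \<ge> 2\<close> by simp
  then have "card (snd ` ?P) = n" using snd_P \<open>f \<in> ?F\<close> by simp
  moreover have "{s. \<exists>t. (s, t) \<in> V \<and> simplex_dim t = n - 1} = fst ` ?P" by force
  ultimately show ?thesis by simp
qed

theorem mainTheorem4:
  fixes n :: nat and V :: "(nat set \<times> nat set) set"
  assumes "n \<ge> 3"
    and "optimal_acyclic_matching (Delta n) V"
  shows "let \<rho> = {(s, t) \<in> V. simplex_dim t \<le> n - 2};
             K = skeleton (Delta n) (n - 2);
             C = critical K \<rho>
         in optimal_acyclic_matching K \<rho>
          \<and> card {s \<in> C. simplex_dim s = 0} = 1
          \<and> card {s \<in> C. simplex_dim s = n - 2} = n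
          \<and> (\<forall>s\<in>C. simplex_dim s = 0 \<or> simplex_dim s = n - 2)"
proof -
  have am: "acyclic_matching (Delta n) V" and m: "is_matching (Delta n) V"
    using assms(2) unfolding optimal_acyclic_matching_def acyclic_matching_def by auto
  obtain v where crit_V: "critical (Delta n) V = {{v}}"
    using optimal_acyclic_matching_Delta_critical[OF assms(2)] .
  define S where "S = {s. \<exists>t. (s, t) \<in> V \<and> simplex_dim t = n - 1}"
  have card_S: "card S = n"
    unfolding S_def using card_ridges_matched_with_facets[OF m] crit_V assms(1)
    by (simp add: simplex_dim_def)
  have dim_S: "simplex_dim s = n - 2" if "s \<in> S" for s
    using that is_matching_hasse_edge(4)[OF m] unfolding S_def by force
  have "{v} \<in> skeleton (Delta n) (n - 2)"
    using crit_V unfolding critical_def skeleton_def by (auto simp: simplex_dim_def)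
  moreover have "n - 2 + 1 = n - 1" using assms(1) by simp
  ultimately have crit: "critical (skeleton (Delta n) (n - 2)) {(s, t) \<in> V. simplex_dim t \<le> n - 2}
      = insert {v} S"
    using critical_skeleton[OF m, of "n - 2"] crit_V unfolding S_def by auto
  have "{v} \<notin> S" using dim_S assms(1) by (fastforce simp: simplex_dim_def)
  have opt: "optimal_acyclic_matching (skeleton (Delta n) (n - 2))
      {(s, t) \<in> V. simplex_dim t \<le> n - 2}"
    using simplicial_complex_skeleton[OF simplicial_complex_Delta] acyclic_matching_skeleton[OF am]
      crit \<open>{v} \<notin> S\<close> dim_S by (rule optimal_acyclic_matchingI)
  have "simplex_dim {v} = 0" "n - 2 \<noteq> 0" using assms(1) by (simp_all add: simplex_dim_def)
  then have "{s \<in> insert {v} S. simplex_dim s = 0} = {{v}}"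
    and "{s \<in> insert {v} S. simplex_dim s = n - 2} = S"
    using dim_S by auto
  with opt show ?thesis unfolding Let_def crit using card_S dim_S by auto
qed

end
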